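(* Let $f:X\to X$ be a nonuniformly expanding map with induced map $F=f^r:Y\to Y$, expansion constant $\lambda>1$, and $\operatorname{diam}(Y)\le1$. Let $v:X\to\mathbb{R}$ be $C^\eta$ with $\eta\in(0,1]$, and set $\theta=\lambda^{-\eta}$. Then: - $V_\omega\in F_\theta^{\rm loc}(Y)$ for all $\omega\in[0,2\pi]$; - there is a constant $C\ge1$ such that $D_\theta V_\omega(a)\le C|v|_\eta r(a)$ for all $\omega\in[0,2\pi]$ and $a\in\alpha$.
   Context: Nonuniformly expanding map: $(X,d)$ is a locally compact separable bounded metric space with Borel probability measure $m_0$, and $f:X\to X$ is nonsingular with $m_0$ ergodic. $Y\subset X$ is measurable with $m_0(Y)>0$, and $\alpha$ is an at most countable measurable partition of $Y$. $r:Y\to\mathbb{Z}^+$ is integrable and constant on each $a\in\alpha$ (value $r(a)$). There are constants $\lambda>1$, $\eta_0\in(0,1)$, $C_0\ge1$ such that for each $a\in\alpha$: (1) $F=f^{r(a)}:a\to Y$ is a measure-theoretic bijection; (2) $d(Fx,Fy)\ge\lambda d(x,y)$ for $x,y\in a$; (3) $d(f^\ell x,f^\ell y)\le C_0d(Fx,Fy)$ for $x,y\in a$ and $0\le\ell<r(a)$; (4) $g_a=d(m_0|_a\circ F^{-1})/dm_0|_Y$ satisfies $|\log g_a(x)-\log g_a(y)|\le C_0d(x,y)^{\eta_0}$ on $Y$. $d$ is rescaled so that $\operatorname{diam}(Y)\le1$. Symbolic metric: the $n$-cylinders are $\bigcap_{j=0}^{n-1}F^{-j}a_j$ with $a_j\in\alpha$.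 The separation time $s(x,y)$ is the least $n\ge0$ such that $x,y$ lie in distinct $n$-cylinders, and $d_\theta(x,y)=\theta^{s(x,y)}$. A function $\phi:Y\to\mathbb{C}$ is locally Lipschitz, written $\phi\in F_\theta^{\rm loc}(Y)$, if for each $a\in\alpha$, $D_\theta\phi(a)=\sup_{x,y\in a,x\ne y}|\phi(x)-\phi(y)|/d_\theta(x,y)<\infty$ and $\phi|_a$ is bounded. $|v|_\eta=\sup_{x\ne y}|v(x)-v(y)|/d(x,y)^\eta$. $V_\omega(y)=\sum_{\ell=0}^{r(y)-1}e^{i\ell\omega}v(f^\ell y)$. *)

theory Defs
  imports "HOL-Probability.Probability"
begin

definition induced_map :: "('a \<Rightarrow> 'a) \<Rightarrow> ('a \<Rightarrow> nat) \<Rightarrow> 'a \<Rightarrow> 'a" where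
  "induced_map f r y = (f ^^ r y) y"

definition mt_bijection :: "'a measure \<Rightarrow> ('a \<Rightarrow> 'a) \<Rightarrow> 'a set \<Rightarrow> 'a set \<Rightarrow> bool" where
  "mt_bijection M F a Y \<longleftrightarrow> F ` a \<subseteq> Y \<and>
     (\<exists>N \<in> null_sets M. \<exists>N' \<in> null_sets M. inj_on F (a - N) \<and> Y - F ` (a - N) \<subseteq> N')"

definition nonsingular :: "'a measure \<Rightarrow> ('a \<Rightarrow> 'a) \<Rightarrow> bool" where
  "nonsingular M f \<longleftrightarrow> f \<in> measurable M M \<and>
     (\<forall>A \<in> sets M. emeasure M (f -` A \<inter> space M) = 0 \<longleftrightarrow> emeasure M A = 0)"

definition ergodic :: "'a measure \<Rightarrow> ('a \<Rightarrow> 'a) \<Rightarrow> bool" where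
  "ergodic M f \<longleftrightarrow> (\<forall>A \<in> sets M. f -` A \<inter> space M = A \<longrightarrow>
     emeasure M A = 0 \<or> emeasure M (space M - A) = 0)"

definition nonuniformly_expanding ::
  "'a::metric_space set \<Rightarrow> 'a measure \<Rightarrow> ('a \<Rightarrow> 'a) \<Rightarrow> 'a set \<Rightarrow> 'a set set \<Rightarrow> ('a \<Rightarrow> nat)
     \<Rightarrow> real \<Rightarrow> real \<Rightarrow> real \<Rightarrow> bool" where
  "nonuniformly_expanding X m0 f Y \<alpha> r lam \<eta>0 C0 \<longleftrightarrow>
     \<comment> \<open>the space\<close>
     locally_compact_space (top_of_set X) \<and> separable_space (top_of_set X) \<and> bounded X \<and>
     \<comment> \<open>Borel probability measure\<close>
     space m0 = X \<and> sets m0 = sets (restrict_space borel X) \<and> prob_space m0 \<and>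
     \<comment> \<open>nonsingular ergodic map\<close>
     f ` X \<subseteq> X \<and> nonsingular m0 f \<and> ergodic m0 f \<and>
     \<comment> \<open>inducing set and partition\<close>
     Y \<subseteq> X \<and> Y \<in> sets m0 \<and> emeasure m0 Y > 0 \<and>
     countable \<alpha> \<and> \<alpha> \<subseteq> sets m0 \<and> {} \<notin> \<alpha> \<and> disjoint \<alpha> \<and> \<Union>\<alpha> = Y \<and>
     \<comment> \<open>return time\<close>
     (\<forall>y\<in>Y. r y \<ge> 1) \<and> integrable m0 (\<lambda>y. indicator Y y * real (r y)) \<and>
     (\<forall>a\<in>\<alpha>. \<forall>x\<in>a. \<forall>y\<in>a. r x = r y) \<and>
     \<comment> \<open>constants\<close>
     lam > 1 \<and> 0 < \<eta>0 \<and> \<eta>0 < 1 \<and> C0 \<ge> 1 \<and>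
     \<comment> \<open>conditions (1)-(4)\<close>
     (\<forall>a\<in>\<alpha>.
        mt_bijection m0 (induced_map f r) a Y \<and>
        (\<forall>x\<in>a. \<forall>y\<in>a. dist (induced_map f r x) (induced_map f r y) \<ge> lam * dist x y) \<and>
        (\<forall>x\<in>a. \<forall>y\<in>a. \<forall>l<r x. dist ((f ^^ l) x) ((f ^^ l) y)
              \<le> C0 * dist (induced_map f r x) (induced_map f r y)) \<and>
        (\<exists>g. g \<in> borel_measurable m0 \<and> (\<forall>y\<in>Y. g y > 0) \<and>
           distr (restrict_space m0 a) m0 (induced_map f r)
             = density m0 (\<lambda>y. ennreal (indicator Y y * g y)) \<and>
           (\<forall>x\<in>Y. \<forall>y\<in>Y. \<bar>ln (g x) - ln (g y)\<bar> \<le> C0 * dist x y powr \<eta>0)))"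

definition same_cylinder :: "'a set set \<Rightarrow> ('a \<Rightarrow> 'a) \<Rightarrow> nat \<Rightarrow> 'a \<Rightarrow> 'a \<Rightarrow> bool" where
  "same_cylinder \<alpha> F n x y \<longleftrightarrow> (\<forall>j<n. \<exists>a\<in>\<alpha>. (F ^^ j) x \<in> a \<and> (F ^^ j) y \<in> a)"

definition d_theta :: "real \<Rightarrow> 'a set set \<Rightarrow> ('a \<Rightarrow> 'a) \<Rightarrow> 'a \<Rightarrow> 'a \<Rightarrow> real" where
  "d_theta \<theta> \<alpha> F x y =
     (if \<exists>n. \<not> same_cylinder \<alpha> F n x y
      then \<theta> ^ (LEAST n. \<not> same_cylinder \<alpha> F n x y) else 0)"

text \<open>D_theta phi(a), valued in the extended reals (positive/0 = infinity).\<close>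
definition D_theta :: "real \<Rightarrow> 'a set set \<Rightarrow> ('a \<Rightarrow> 'a) \<Rightarrow> ('a \<Rightarrow> complex) \<Rightarrow> 'a set \<Rightarrow> ereal" where
  "D_theta \<theta> \<alpha> F \<phi> a =
     (SUP p \<in> {(x, y). x \<in> a \<and> y \<in> a \<and> x \<noteq> y}.
        ereal (cmod (\<phi> (fst p) - \<phi> (snd p))) / ereal (d_theta \<theta> \<alpha> F (fst p) (snd p)))"

definition F_theta_loc :: "real \<Rightarrow> 'a set set \<Rightarrow> ('a \<Rightarrow> 'a) \<Rightarrow> ('a \<Rightarrow> complex) set" where
  "F_theta_loc \<theta> \<alpha> F = {\<phi>. \<forall>a\<in>\<alpha>. D_theta \<theta> \<alpha> F \<phi> a < \<infinity> \<and> bounded (\<phi> ` a)}"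

definition holder_seminorm :: "'a::metric_space set \<Rightarrow> real \<Rightarrow> ('a \<Rightarrow> real) \<Rightarrow> ereal" where
  "holder_seminorm X \<eta> v =
     (SUP p \<in> {(x, y). x \<in> X \<and> y \<in> X \<and> x \<noteq> y}.
        ereal (\<bar>v (fst p) - v (snd p)\<bar> / dist (fst p) (snd p) powr \<eta>))"

definition V_omega :: "('a \<Rightarrow> 'a) \<Rightarrow> ('a \<Rightarrow> nat) \<Rightarrow> ('a \<Rightarrow> real) \<Rightarrow> real \<Rightarrow> 'a \<Rightarrow> complex" where
  "V_omega f r v \<omega> y = (\<Sum>l<r y. exp (\<i> * of_nat l * of_real \<omega>) * of_real (v ((f ^^ l) y)))"

end

theory Submission
  imports Defs
begin

text \<open>
  Write \<open>F = f\<^sup>r\<close>. If \<open>x, y \<in> a\<close> have separation time \<open>n + 2\<close>, then \<open>F x, F y\<close> stay in a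
  common partition element for \<open>n\<close> further steps of \<open>F\<close>, each expanding distances by \<open>\<lambda>\<close>, and
  then land in \<open>Y\<close>, whose diameter is at most 1; hence \<open>d(F x, F y) \<le> \<lambda>\<^sup>-\<^sup>n\<close>. By condition (3)
  every intermediate pair \<open>f\<^sup>l x, f\<^sup>l y\<close> with \<open>l < r(a)\<close> is then \<open>C\<^sub>0 \<lambda>\<^sup>-\<^sup>n\<close>-close, so each of
  the \<open>r(a)\<close> terms of \<open>V\<^sub>\<omega> x - V\<^sub>\<omega> y\<close> is at most \<open>|v|\<^sub>\<eta> C\<^sub>0\<^sup>\<eta> \<theta>\<^sup>n = |v|\<^sub>\<eta> C\<^sub>0\<^sup>\<eta> \<theta>\<^sup>-\<^sup>2 d\<^sub>\<theta>(x, y)\<close>,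
  uniformly in \<open>\<omega>\<close>.
\<close>

lemma mt_bijection_image_subset: "mt_bijection M F a Y \<Longrightarrow> F ` a \<subseteq> Y"
  unfolding mt_bijection_def by blast

lemma nonuniformly_expandingD:
  assumes "nonuniformly_expanding X m0 f Y \<alpha> r lam \<eta>0 C0"
  shows "bounded X" "Y \<subseteq> X" "f ` X \<subseteq> X" "\<Union>\<alpha> = Y" "{} \<notin> \<alpha>" "lam > 1" "C0 \<ge> 1"
    and "\<And>a x y. a \<in> \<alpha> \<Longrightarrow> x \<in> a \<Longrightarrow> y \<in> a \<Longrightarrow> r x = r y"
    and "\<And>a x. a \<in> \<alpha> \<Longrightarrow> x \<in> a \<Longrightarrow> induced_map f r x \<in> Y"
    and "\<And>a x y. a \<in> \<alpha> \<Longrightarrow> x \<in> a \<Longrightarrow> y \<in> a \<Longrightarrow>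
           lam * dist x y \<le> dist (induced_map f r x) (induced_map f r y)"
    and "\<And>a x y l. a \<in> \<alpha> \<Longrightarrow> x \<in> a \<Longrightarrow> y \<in> a \<Longrightarrow> l < r x \<Longrightarrow>
           dist ((f ^^ l) x) ((f ^^ l) y) \<le> C0 * dist (induced_map f r x) (induced_map f r y)"
proof -
  note N = assms[unfolded nonuniformly_expanding_def]
  show "bounded X" "Y \<subseteq> X" "f ` X \<subseteq> X" "\<Union>\<alpha> = Y" "{} \<notin> \<alpha>" "lam > 1" "C0 \<ge> 1"
    using N by simp_all
  have "\<forall>a\<in>\<alpha>. \<forall>x\<in>a. \<forall>y\<in>a. r x = r y"
    using N by (elim conjE) assumption
  then show "\<And>a x y. a \<in> \<alpha> \<Longrightarrow> x \<in> a \<Longrightarrow> y \<in> a \<Longrightarrow> r x = r y"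
    by blast
  have "\<forall>a\<in>\<alpha>. mt_bijection m0 (induced_map f r) a Y \<and>
        (\<forall>x\<in>a. \<forall>y\<in>a. dist (induced_map f r x) (induced_map f r y) \<ge> lam * dist x y) \<and>
        (\<forall>x\<in>a. \<forall>y\<in>a. \<forall>l<r x. dist ((f ^^ l) x) ((f ^^ l) y)
              \<le> C0 * dist (induced_map f r x) (induced_map f r y)) \<and>
        (\<exists>g. g \<in> borel_measurable m0 \<and> (\<forall>y\<in>Y. g y > 0) \<and>
           distr (restrict_space m0 a) m0 (induced_map f r)
             = density m0 (\<lambda>y. ennreal (indicator Y y * g y)) \<and>
           (\<forall>x\<in>Y. \<forall>y\<in>Y. \<bar>ln (g x) - ln (g y)\<bar> \<le> C0 * dist x y powr \<eta>0))"
    using N by (elim conjE) assumption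
  then have conds: "\<forall>a\<in>\<alpha>. mt_bijection m0 (induced_map f r) a Y \<and>
        (\<forall>x\<in>a. \<forall>y\<in>a. dist (induced_map f r x) (induced_map f r y) \<ge> lam * dist x y) \<and>
        (\<forall>x\<in>a. \<forall>y\<in>a. \<forall>l<r x. dist ((f ^^ l) x) ((f ^^ l) y)
              \<le> C0 * dist (induced_map f r x) (induced_map f r y))"
    by blast
  show "induced_map f r x \<in> Y" if "a \<in> \<alpha>" "x \<in> a" for a x
  proof -
    have "mt_bijection m0 (induced_map f r) a Y"
      using conds \<open>a \<in> \<alpha>\<close> by blast
    then show ?thesis
      using mt_bijection_image_subset \<open>x \<in> a\<close> by blast
  qed
  show "\<And>a x y. a \<in> \<alpha> \<Longrightarrow> x \<in> a \<Longrightarrow> y \<in> a \<Longrightarrow>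
          lam * dist x y \<le> dist (induced_map f r x) (induced_map f r y)"
    using conds by blast
  show "\<And>a x y l. a \<in> \<alpha> \<Longrightarrow> x \<in> a \<Longrightarrow> y \<in> a \<Longrightarrow> l < r x \<Longrightarrow>
          dist ((f ^^ l) x) ((f ^^ l) y) \<le> C0 * dist (induced_map f r x) (induced_map f r y)"
    using conds by blast
qed

lemma same_cylinder_mono:
  "m \<le> n \<Longrightarrow> same_cylinder \<alpha> F n x y \<Longrightarrow> same_cylinder \<alpha> F m x y"
  unfolding same_cylinder_def by auto

lemma same_cylinder_Suc_iff:
  "same_cylinder \<alpha> F (Suc n) x y \<longleftrightarrow>
     same_cylinder \<alpha> F n x y \<and> (\<exists>a\<in>\<alpha>. (F ^^ n) x \<in> a \<and> (F ^^ n) y \<in> a)"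
  unfolding same_cylinder_def by (auto simp: less_Suc_eq)

lemma same_cylinder_Suc_shift:
  assumes "same_cylinder \<alpha> F (Suc n) x y"
  shows "same_cylinder \<alpha> F n (F x) (F y)"
  unfolding same_cylinder_def
proof (intro allI impI)
  fix j assume "j < n"
  then have "Suc j < Suc n"
    by simp
  then have "\<exists>a\<in>\<alpha>. (F ^^ Suc j) x \<in> a \<and> (F ^^ Suc j) y \<in> a"
    using assms unfolding same_cylinder_def by blast
  then show "\<exists>a\<in>\<alpha>. (F ^^ j) (F x) \<in> a \<and> (F ^^ j) (F y) \<in> a"
    by (simp only: funpow_Suc_right o_apply)
qed

lemma same_cylinder_one:
  "a \<in> \<alpha> \<Longrightarrow> x \<in> a \<Longrightarrow> y \<in> a \<Longrightarrow> same_cylinder \<alpha> F 1 x y"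
  unfolding same_cylinder_def by auto

lemma d_theta_eq_power:
  assumes "same_cylinder \<alpha> F n x y" "\<not> same_cylinder \<alpha> F (Suc n) x y"
  shows "d_theta \<theta> \<alpha> F x y = \<theta> ^ Suc n"
proof -
  have "(LEAST m. \<not> same_cylinder \<alpha> F m x y) = Suc n"
  proof (rule Least_equality)
    fix m assume not_m: "\<not> same_cylinder \<alpha> F m x y"
    show "Suc n \<le> m"
    proof (rule ccontr)
      assume "\<not> Suc n \<le> m"
      then have "m \<le> n"
        by simp
      then show False
        using not_m same_cylinder_mono[OF _ assms(1)] by simp
    qed
  qed (rule assms(2))
  moreover have "\<exists>m. \<not> same_cylinder \<alpha> F m x y"
    using assms(2) by blast
  ultimately show ?thesis
    unfolding d_theta_def by simp
qed

lemma d_theta_nonneg: "0 \<le> \<theta> \<Longrightarrow> 0 \<le> d_theta \<theta> \<alpha> F x y"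
  unfolding d_theta_def by simp

lemma d_theta_le_one: "0 \<le> \<theta> \<Longrightarrow> \<theta> \<le> 1 \<Longrightarrow> d_theta \<theta> \<alpha> F x y \<le> 1"
  unfolding d_theta_def by (simp add: power_le_one)

lemma separation_time_cases:
  assumes "a \<in> \<alpha>" "x \<in> a" "y \<in> a"
  obtains "\<And>n. same_cylinder \<alpha> F n x y"
    | n where "same_cylinder \<alpha> F (Suc n) x y" "\<not> same_cylinder \<alpha> F (Suc (Suc n)) x y"
proof (cases "\<exists>m. \<not> same_cylinder \<alpha> F m x y")
  case True
  define s where "s = (LEAST m. \<not> same_cylinder \<alpha> F m x y)"
  have not_s: "\<not> same_cylinder \<alpha> F s x y"
    unfolding s_def using True by (rule LeastI_ex)
  have "same_cylinder \<alpha> F 1 x y"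
    using assms by (rule same_cylinder_one)
  then have "2 \<le> s"
    using not_s same_cylinder_mono[of s 1 \<alpha> F x y] by (cases "s \<le> 1") auto
  then have "Suc (s - 2) < s"
    by simp
  then have "same_cylinder \<alpha> F (Suc (s - 2)) x y"
    unfolding s_def by (metis not_less_Least)
  moreover have "Suc (Suc (s - 2)) = s"
    using \<open>2 \<le> s\<close> by simp
  ultimately show thesis
    using that(2) not_s by metis
next
  case False
  then show thesis
    using that(1) by blast
qed

lemma D_theta_le_if_d_theta_Lipschitz:
  assumes "0 \<le> \<theta>" "0 \<le> B"
    and "\<And>x y. x \<in> a \<Longrightarrow> y \<in> a \<Longrightarrow> cmod (\<phi> x - \<phi> y) \<le> B * d_theta \<theta> \<alpha> F x y"
  shows "D_theta \<theta> \<alpha> F \<phi> a \<le> ereal B"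
  unfolding D_theta_def
proof (rule SUP_least)
  fix p assume "p \<in> {(x, y). x \<in> a \<and> y \<in> a \<and> x \<noteq> y}"
  then obtain x y where p: "p = (x, y)" and xy: "x \<in> a" "y \<in> a"
    by blast
  note bound = assms(3)[OF xy]
  have "ereal (cmod (\<phi> x - \<phi> y)) / ereal (d_theta \<theta> \<alpha> F x y) \<le> ereal B"
  proof (cases "d_theta \<theta> \<alpha> F x y = 0")
    case True
    then have "cmod (\<phi> x - \<phi> y) = 0"
      using bound by (simp add: order_antisym)
    then show ?thesis
      using True \<open>0 \<le> B\<close> by (simp add: zero_ereal_def[symmetric])
  next
    case False
    then have "0 < d_theta \<theta> \<alpha> F x y"
      using d_theta_nonneg[OF \<open>0 \<le> \<theta>\<close>] by (simp add: order_less_le)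
    then show ?thesis
      using bound by (simp add: divide_le_eq)
  qed
  then show "ereal (cmod (\<phi> (fst p) - \<phi> (snd p))) / ereal (d_theta \<theta> \<alpha> F (fst p) (snd p))
               \<le> ereal B"
    unfolding p by simp
qed

lemma bounded_image_if_d_theta_Lipschitz:
  assumes "0 \<le> \<theta>" "\<theta> \<le> 1" "0 \<le> B"
    and "\<And>x y. x \<in> a \<Longrightarrow> y \<in> a \<Longrightarrow> cmod (\<phi> x - \<phi> y) \<le> B * d_theta \<theta> \<alpha> F x y"
  shows "bounded (\<phi> ` a)"
proof (cases "a = {}")
  case False
  then obtain y0 where y0: "y0 \<in> a" by blast
  have "cmod (\<phi> y) \<le> cmod (\<phi> y0) + B" if "y \<in> a" for y
  proof -
    have "cmod (\<phi> y - \<phi> y0) \<le> B * d_theta \<theta> \<alpha> F y y0"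
      using assms(4) that y0 .
    also have "\<dots> \<le> B"
      using d_theta_le_one[OF assms(1,2)] \<open>0 \<le> B\<close> by (rule mult_left_le)
    finally show ?thesis
      using norm_triangle_sub[of "\<phi> y" "\<phi> y0"] by linarith
  qed
  then show ?thesis
    unfolding bounded_iff by blast
qed simp

lemma dist_iterate_ge_along_cylinder:
  assumes expanding: "\<And>a x y. a \<in> \<alpha> \<Longrightarrow> x \<in> a \<Longrightarrow> y \<in> a \<Longrightarrow> lam * dist x y \<le> dist (F x) (F y)"
    and "0 \<le> lam" "same_cylinder \<alpha> F n x y"
  shows "lam ^ n * dist x y \<le> dist ((F ^^ n) x) ((F ^^ n) y)"
  using \<open>same_cylinder \<alpha> F n x y\<close>
proof (induction n)
  case 0
  then show ?case by simp
next
  case (Suc n)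
  then obtain a where a: "a \<in> \<alpha>" "(F ^^ n) x \<in> a" "(F ^^ n) y \<in> a"
    and IH: "lam ^ n * dist x y \<le> dist ((F ^^ n) x) ((F ^^ n) y)"
    by (auto simp: same_cylinder_Suc_iff)
  have "lam ^ Suc n * dist x y = lam * (lam ^ n * dist x y)"
    by simp
  also have "\<dots> \<le> lam * dist ((F ^^ n) x) ((F ^^ n) y)"
    using IH \<open>0 \<le> lam\<close> by (rule mult_left_mono)
  also have "\<dots> \<le> dist ((F ^^ Suc n) x) ((F ^^ Suc n) y)"
    using expanding[OF a] by simp
  finally show ?case .
qed

lemma dist_induced_map_le:
  assumes nue: "nonuniformly_expanding X m0 f Y \<alpha> r lam \<eta>0 C0"
    and diamY: "diameter Y \<le> 1"
    and sc: "same_cylinder \<alpha> (induced_map f r) (Suc n) x y"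
  shows "lam ^ n * dist (induced_map f r x) (induced_map f r y) \<le> 1"
proof -
  let ?F = "induced_map f r"
  note N = nonuniformly_expandingD[OF nue]
  obtain a where a: "a \<in> \<alpha>" "(?F ^^ n) x \<in> a" "(?F ^^ n) y \<in> a"
    using sc by (auto simp: same_cylinder_Suc_iff)
  have "lam ^ n * dist (?F x) (?F y) \<le> dist ((?F ^^ n) (?F x)) ((?F ^^ n) (?F y))"
    using N(10) N(6) same_cylinder_Suc_shift[OF sc]
    by (intro dist_iterate_ge_along_cylinder[where \<alpha> = \<alpha>]) auto
  also have "\<dots> = dist (?F ((?F ^^ n) x)) (?F ((?F ^^ n) y))"
    by (simp only: funpow_swap1)
  also have "\<dots> \<le> diameter Y"
    using bounded_subset[OF N(1,2)] N(9)[OF a(1,2)] N(9)[OF a(1,3)]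
    by (rule diameter_bounded_bound)
  finally show ?thesis
    using diamY by linarith
qed

lemma powr_le_power_if_scaled_le_one:
  fixes lam d \<eta> :: real
  assumes "lam > 0" "0 \<le> d" "0 \<le> \<eta>" "lam ^ n * d \<le> 1"
  shows "d powr \<eta> \<le> (lam powr (- \<eta>)) ^ n"
proof -
  have "d \<le> lam powr (- real n)"
    using assms by (simp add: powr_minus_divide powr_realpow field_simps)
  then have "d powr \<eta> \<le> (lam powr (- real n)) powr \<eta>"
    using assms by (intro powr_mono2) auto
  also have "\<dots> = (lam powr (- \<eta>)) ^ n"
    using assms by (simp add: powr_powr powr_realpow[symmetric] mult.commute)
  finally show ?thesis .
qed

lemma nonpos_if_power_scaled_le_one:
  fixes lam d :: real
  assumes "lam > 1" "\<And>n. lam ^ n * d \<le> 1"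
  shows "d \<le> 0"
proof (rule ccontr)
  assume "\<not> d \<le> 0"
  obtain n where "1 / d < lam ^ n"
    using real_arch_pow[OF \<open>lam > 1\<close>] by blast
  then have "1 < lam ^ n * d"
    using \<open>\<not> d \<le> 0\<close> by (simp add: divide_less_eq)
  then show False
    using assms(2)[of n] by simp
qed

lemma holder_seminorm_bound:
  assumes "holder_seminorm X \<eta> v < \<infinity>" "p \<in> X" "q \<in> X"
  shows "\<bar>v p - v q\<bar> \<le> real_of_ereal (holder_seminorm X \<eta> v) * dist p q powr \<eta>"
proof (cases "p = q")
  case False
  have "ereal (\<bar>v p - v q\<bar> / dist p q powr \<eta>) \<le> holder_seminorm X \<eta> v"
    unfolding holder_seminorm_def by (rule SUP_upper2[of "(p, q)"]) (use assms False in auto)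
  with assms(1) have "\<bar>v p - v q\<bar> / dist p q powr \<eta> \<le> real_of_ereal (holder_seminorm X \<eta> v)"
    by (cases "holder_seminorm X \<eta> v") auto
  then show ?thesis
    using False by (simp add: divide_le_eq)
qed simp

lemma holder_seminorm_nonneg: "0 \<le> real_of_ereal (holder_seminorm X \<eta> v)"
proof (cases "holder_seminorm X \<eta> v")
  case (real t)
  have "holder_seminorm X \<eta> v \<noteq> -\<infinity>" by (simp add: real)
  then have "{(x, y). x \<in> X \<and> y \<in> X \<and> x \<noteq> y} \<noteq> {}"
    unfolding holder_seminorm_def by (intro notI) (simp add: bot_ereal_def)
  then obtain p q where "p \<in> X" "q \<in> X" "p \<noteq> q"
    by auto
  then have "ereal (\<bar>v p - v q\<bar> / dist p q powr \<eta>) \<le> holder_seminorm X \<eta> v"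
    unfolding holder_seminorm_def by (intro SUP_upper2[of "(p, q)"]) auto
  then show ?thesis
    using real order_trans[of 0 "\<bar>v p - v q\<bar> / dist p q powr \<eta>" t] by simp
qed simp_all

lemma cmod_V_omega_diff_le:
  assumes "r x = r y"
  shows "cmod (V_omega f r v \<omega> x - V_omega f r v \<omega> y)
           \<le> (\<Sum>l<r x. \<bar>v ((f ^^ l) x) - v ((f ^^ l) y)\<bar>)"
proof -
  have "V_omega f r v \<omega> x - V_omega f r v \<omega> y
          = (\<Sum>l<r x. exp (\<i> * of_nat l * of_real \<omega>) * of_real (v ((f ^^ l) x) - v ((f ^^ l) y)))"
    unfolding V_omega_def assms by (simp add: sum_subtractf algebra_simps)
  also have "cmod \<dots> \<le> (\<Sum>l<r x. \<bar>v ((f ^^ l) x) - v ((f ^^ l) y)\<bar>)"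
    by (rule order_trans[OF norm_sum]) (simp add: norm_mult norm_exp_eq_Re flip: of_real_diff)
  finally show ?thesis .
qed

lemma V_omega_diff_le_dist_induced_map:
  assumes nue: "nonuniformly_expanding X m0 f Y \<alpha> r lam \<eta>0 C0"
    and holder: "holder_seminorm X \<eta> v < \<infinity>" and "0 < \<eta>"
    and "a \<in> \<alpha>" "x \<in> a" "y \<in> a"
  shows "cmod (V_omega f r v \<omega> x - V_omega f r v \<omega> y)
           \<le> real (r x) * real_of_ereal (holder_seminorm X \<eta> v)
               * (C0 * dist (induced_map f r x) (induced_map f r y)) powr \<eta>"
proof -
  let ?H = "real_of_ereal (holder_seminorm X \<eta> v)"
  note N = nonuniformly_expandingD[OF nue]
  have in_X: "(f ^^ l) z \<in> X" if "z \<in> a" for l z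
  proof (induction l)
    case 0
    show ?case
      using that \<open>a \<in> \<alpha>\<close> N(2,4) by auto
  next
    case (Suc l)
    then show ?case
      using N(3) by auto
  qed
  have term_le: "\<bar>v ((f ^^ l) x) - v ((f ^^ l) y)\<bar>
          \<le> ?H * (C0 * dist (induced_map f r x) (induced_map f r y)) powr \<eta>" if "l < r x" for l
  proof -
    have "\<bar>v ((f ^^ l) x) - v ((f ^^ l) y)\<bar> \<le> ?H * dist ((f ^^ l) x) ((f ^^ l) y) powr \<eta>"
      using holder_seminorm_bound[OF holder in_X[OF \<open>x \<in> a\<close>] in_X[OF \<open>y \<in> a\<close>]] .
    also have "\<dots> \<le> ?H * (C0 * dist (induced_map f r x) (induced_map f r y)) powr \<eta>"
      using N(11)[OF \<open>a \<in> \<alpha>\<close> \<open>x \<in> a\<close> \<open>y \<in> a\<close> that] \<open>0 < \<eta>\<close> holder_seminorm_nonneg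
      by (intro mult_left_mono powr_mono2) auto
    finally show ?thesis .
  qed
  have "cmod (V_omega f r v \<omega> x - V_omega f r v \<omega> y)
          \<le> (\<Sum>l<r x. \<bar>v ((f ^^ l) x) - v ((f ^^ l) y)\<bar>)"
    using N(8)[OF \<open>a \<in> \<alpha>\<close> \<open>x \<in> a\<close> \<open>y \<in> a\<close>] by (rule cmod_V_omega_diff_le)
  also have "\<dots> \<le> (\<Sum>l<r x. ?H * (C0 * dist (induced_map f r x) (induced_map f r y)) powr \<eta>)"
    using term_le by (intro sum_mono) simp
  finally show ?thesis
    by (simp add: mult.assoc)
qed

lemma V_omega_diff_le_d_theta:
  assumes nue: "nonuniformly_expanding X m0 f Y \<alpha> r lam \<eta>0 C0"
    and diamY: "diameter Y \<le> 1"
    and "0 < \<eta>" and holder: "holder_seminorm X \<eta> v < \<infinity>"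
    and theta: "\<theta> = lam powr (- \<eta>)"
    and "a \<in> \<alpha>" "x \<in> a" "y \<in> a"
  shows "cmod (V_omega f r v \<omega> x - V_omega f r v \<omega> y)
           \<le> C0 powr \<eta> / \<theta>\<^sup>2 * real_of_ereal (holder_seminorm X \<eta> v) * real (r x)
               * d_theta \<theta> \<alpha> (induced_map f r) x y"
    (is "?lhs \<le> ?K * ?H * _ * _")
proof -
  let ?F = "induced_map f r"
  note N = nonuniformly_expandingD[OF nue]
  note bound = V_omega_diff_le_dist_induced_map[OF nue holder \<open>0 < \<eta>\<close> \<open>a \<in> \<alpha>\<close> \<open>x \<in> a\<close> \<open>y \<in> a\<close>]
  have "0 < \<theta>"
    using theta N(6) by simp
  show ?thesis
  proof (cases rule: separation_time_cases[OF \<open>a \<in> \<alpha>\<close> \<open>x \<in> a\<close> \<open>y \<in> a\<close>, of ?F])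
    case 1
    have "dist (?F x) (?F y) \<le> 0"
      using N(6) dist_induced_map_le[OF nue diamY 1] by (rule nonpos_if_power_scaled_le_one)
    then have "?lhs = 0"
      using bound \<open>0 < \<eta>\<close> by simp
    moreover have "0 \<le> ?K * ?H * real (r x) * d_theta \<theta> \<alpha> ?F x y"
      using \<open>0 < \<theta>\<close> holder_seminorm_nonneg d_theta_nonneg[of \<theta>]
      by (intro mult_nonneg_nonneg divide_nonneg_nonneg) auto
    ultimately show ?thesis
      by simp
  next
    case (2 n)
    have "dist (?F x) (?F y) powr \<eta> \<le> \<theta> ^ n"
      unfolding theta using N(6) \<open>0 < \<eta>\<close> dist_induced_map_le[OF nue diamY 2(1)]
      by (intro powr_le_power_if_scaled_le_one) auto
    then have "(C0 * dist (?F x) (?F y)) powr \<eta> \<le> C0 powr \<eta> * \<theta> ^ n"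
      using N(7) by (simp add: powr_mult mult_left_mono)
    moreover have "0 \<le> real (r x) * ?H"
      using holder_seminorm_nonneg by (intro mult_nonneg_nonneg) auto
    ultimately have "?lhs \<le> real (r x) * ?H * (C0 powr \<eta> * \<theta> ^ n)"
      using bound by (meson mult_left_mono order_trans)
    also have "\<dots> = ?K * ?H * real (r x) * \<theta> ^ Suc (Suc n)"
      using \<open>0 < \<theta>\<close> by (simp add: power2_eq_square field_simps)
    finally show ?thesis
      using d_theta_eq_power[OF 2] by simp
  qed
qed

lemma V_omega_locally_Lipschitz:
  assumes nue: "nonuniformly_expanding X m0 f Y \<alpha> r lam \<eta>0 C0"
    and diamY: "diameter Y \<le> 1"
    and "0 < \<eta>" and holder: "holder_seminorm X \<eta> v < \<infinity>"
    and theta: "\<theta> = lam powr (- \<eta>)"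
    and "a \<in> \<alpha>" "y \<in> a"
  shows "D_theta \<theta> \<alpha> (induced_map f r) (V_omega f r v \<omega>) a
           \<le> ereal (C0 powr \<eta> / \<theta>\<^sup>2 * real_of_ereal (holder_seminorm X \<eta> v) * real (r y))"
    and "bounded (V_omega f r v \<omega> ` a)"
proof -
  let ?B = "C0 powr \<eta> / \<theta>\<^sup>2 * real_of_ereal (holder_seminorm X \<eta> v) * real (r y)"
  note N = nonuniformly_expandingD[OF nue]
  have \<theta>: "0 \<le> \<theta>" "\<theta> \<le> 1"
    using theta N(6) \<open>0 < \<eta>\<close> powr_less_one[of lam "- \<eta>"] by auto
  have "0 \<le> ?B"
    using holder_seminorm_nonneg by (intro mult_nonneg_nonneg divide_nonneg_nonneg) auto
  have bound: "cmod (V_omega f r v \<omega> x - V_omega f r v \<omega> z) \<le> ?B * d_theta \<theta> \<alpha> (induced_map f r) x z"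
    if "x \<in> a" "z \<in> a" for x z
    using V_omega_diff_le_d_theta[OF nue diamY \<open>0 < \<eta>\<close> holder theta \<open>a \<in> \<alpha>\<close> that]
      N(8)[OF \<open>a \<in> \<alpha>\<close> \<open>y \<in> a\<close> \<open>x \<in> a\<close>]
    by simp
  show "D_theta \<theta> \<alpha> (induced_map f r) (V_omega f r v \<omega>) a \<le> ereal ?B"
    using \<theta>(1) \<open>0 \<le> ?B\<close> bound by (rule D_theta_le_if_d_theta_Lipschitz)
  show "bounded (V_omega f r v \<omega> ` a)"
    using \<theta> \<open>0 \<le> ?B\<close> bound by (rule bounded_image_if_d_theta_Lipschitz)
qed

theorem proposition3p3:
  fixes X :: "'a::metric_space set" and m0 :: "'a measure" and f :: "'a \<Rightarrow> 'a"
    and Y :: "'a set" and \<alpha> :: "'a set set" and r :: "'a \<Rightarrow> nat"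
    and lam \<eta>0 C0 \<eta> \<theta> :: real and v :: "'a \<Rightarrow> real"
  assumes nue: "nonuniformly_expanding X m0 f Y \<alpha> r lam \<eta>0 C0"
    and diamY: "diameter Y \<le> 1"
    and eta: "0 < \<eta>" "\<eta> \<le> 1"
    and holder: "holder_seminorm X \<eta> v < \<infinity>"
    and theta: "\<theta> = lam powr (- \<eta>)"
  shows "(\<forall>\<omega>\<in>{0..2*pi}. V_omega f r v \<omega> \<in> F_theta_loc \<theta> \<alpha> (induced_map f r))
       \<and> (\<exists>C\<ge>1. \<forall>\<omega>\<in>{0..2*pi}. \<forall>a\<in>\<alpha>. \<forall>y\<in>a.
            D_theta \<theta> \<alpha> (induced_map f r) (V_omega f r v \<omega>) a
              \<le> ereal (C * real_of_ereal (holder_seminorm X \<eta> v) * real (r y)))"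
proof -
  note N = nonuniformly_expandingD[OF nue]
  have "0 < \<theta>" "\<theta> \<le> 1"
    using theta N(6) eta powr_less_one[of lam "- \<eta>"] by auto
  then have C: "1 \<le> C0 powr \<eta> / \<theta>\<^sup>2"
    using N(7) eta
    by (simp add: ge_one_powr_ge_zero le_divide_eq power_le_one order_trans[of "\<theta>\<^sup>2" 1])
  note locally_Lipschitz = V_omega_locally_Lipschitz[OF nue diamY eta(1) holder theta]
  have "V_omega f r v \<omega> \<in> F_theta_loc \<theta> \<alpha> (induced_map f r)" for \<omega>
    unfolding F_theta_loc_def
  proof (intro CollectI ballI conjI)
    fix a assume "a \<in> \<alpha>"
    then obtain y where "y \<in> a"
      using N(5) by (metis all_not_in_conv)
    show "D_theta \<theta> \<alpha> (induced_map f r) (V_omega f r v \<omega>) a < \<infinity>"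
      using locally_Lipschitz(1)[OF \<open>a \<in> \<alpha>\<close> \<open>y \<in> a\<close>] by (rule order_le_less_trans) simp
    show "bounded (V_omega f r v \<omega> ` a)"
      using locally_Lipschitz(2)[OF \<open>a \<in> \<alpha>\<close> \<open>y \<in> a\<close>] .
  qed
  then show ?thesis
    using locally_Lipschitz(1) C by (intro conjI ballI exI[of _ "C0 powr \<eta> / \<theta>\<^sup>2"]) simp_all
qed

end
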